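(* Let $A\subseteq\omega$ be a c.e. set and $\epsilon$ a positive real number. Then $A$ has a computable subset $B$ such that $\underline{\rho}(B)>\underline{\rho}(A)-\epsilon$.
   Context: For $S\subseteq\omega$ and $n>0$, $\rho_n(S)=|S\cap[0,n)|/n$, and the lower density is $\underline{\rho}(S)=\liminf_n\rho_n(S)$. *)

theory Defs
  imports "HOL-Library.Extended_Real" "HOL-Library.Liminf_Limsup"
begin

datatype recf =
    Zero
  | Succ
  | Proj nat
  | Comp recf "recf list"
  | Prim recf recf
  | Mini recf

inductive rec_eval :: "recf \<Rightarrow> nat list \<Rightarrow> nat \<Rightarrow> bool" where
  eval_Zero: "rec_eval Zero xs 0"
| eval_Succ: "rec_eval Succ (x # xs) (Suc x)"
| eval_Proj: "i < length xs \<Longrightarrow> rec_eval (Proj i) xs (xs ! i)"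
| eval_Comp: "list_all2 (\<lambda>g r. rec_eval g xs r) gs ys \<Longrightarrow> rec_eval f ys y
              \<Longrightarrow> rec_eval (Comp f gs) xs y"
| eval_Prim0: "rec_eval f xs y \<Longrightarrow> rec_eval (Prim f g) (0 # xs) y"
| eval_PrimS: "rec_eval (Prim f g) (n # xs) r \<Longrightarrow> rec_eval g (n # r # xs) y
              \<Longrightarrow> rec_eval (Prim f g) (Suc n # xs) y"
| eval_Mini: "rec_eval f (n # xs) 0 \<Longrightarrow> (\<forall>m<n. \<exists>v. v > 0 \<and> rec_eval f (m # xs) v)
              \<Longrightarrow> rec_eval (Mini f) xs n"

definition computable_set :: "nat set \<Rightarrow> bool" where
  "computable_set B \<longleftrightarrow> (\<exists>f. \<forall>n. rec_eval f [n] (if n \<in> B then 1 else 0))"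

definition ce_set :: "nat set \<Rightarrow> bool" where
  "ce_set A \<longleftrightarrow> (\<exists>f. \<forall>n. n \<in> A \<longleftrightarrow> (\<exists>y. rec_eval f [n] y))"

definition rho :: "nat \<Rightarrow> nat set \<Rightarrow> real" where
  "rho n S = real (card (S \<inter> {0..<n})) / real n"

definition lower_density :: "nat set \<Rightarrow> ereal" where
  "lower_density S = liminf (\<lambda>n. ereal (rho (Suc n) S))"

end

theory Submission
  imports Defs
begin

text \<open>Cutting off every \<open>\<mu>\<close>-search after \<open>t\<close> steps gives an evaluation of partial recursive
  functions that is primitive recursive in \<open>t\<close>, so a c.e. set \<open>A\<close> is the union of an increasing
  computable family of stages \<open>A\<^sub>t\<close>. Choose \<open>a/b\<close> just below the lower density of \<open>A\<close>. From some
  \<open>N\<close> on, at least \<open>a m / b\<close> elements of \<open>A\<close> lie below \<open>m\<close>, so the least stage \<open>s m\<close> at which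
  that many of them have appeared is a computable function of \<open>m\<close>. Put \<open>n\<close> into \<open>B\<close> iff \<open>n\<close> has
  appeared by stage \<open>T n = s 0 + \<dots> + s (K n)\<close>. Then \<open>B \<subseteq> A\<close> is decidable, and every \<open>n > m / K\<close>
  that has appeared by stage \<open>s m\<close> lies in \<open>B\<close> because \<open>T n \<ge> s m\<close>. So below \<open>m\<close> the set \<open>B\<close>
  misses at most \<open>m / K + 1\<close> of these elements, and its lower density is at least \<open>a/b - 1/K\<close>.\<close>

section \<open>Clocked evaluation\<close>

fun prim_iter :: "nat option \<Rightarrow> (nat \<Rightarrow> nat \<Rightarrow> nat option) \<Rightarrow> nat \<Rightarrow> nat option" where
  "prim_iter a h 0 = a"
| "prim_iter a h (Suc m) = (case prim_iter a h m of None \<Rightarrow> None | Some r \<Rightarrow> h m r)"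

definition is_mu :: "(nat \<Rightarrow> nat option) \<Rightarrow> nat \<Rightarrow> bool" where
  "is_mu h n \<longleftrightarrow> h n = Some 0 \<and> (\<forall>m<n. h m \<noteq> None \<and> h m \<noteq> Some 0)"

text \<open>Evaluation in which every \<open>\<mu>\<close>-search is cut off at the clock \<open>t\<close>; \<open>None\<close> stands for
  a time-out as well as for a malformed call.\<close>

fun clocked :: "recf \<Rightarrow> nat \<Rightarrow> nat list \<Rightarrow> nat option" where
  "clocked Zero t xs = Some 0"
| "clocked Succ t xs = (case xs of [] \<Rightarrow> None | x # _ \<Rightarrow> Some (Suc x))"
| "clocked (Proj i) t xs = (if i < length xs then Some (xs ! i) else None)"
| "clocked (Comp f gs) t xs = (let rs = map (\<lambda>g. clocked g t xs) gs in
     if None \<in> set rs then None else clocked f t (map the rs))"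
| "clocked (Prim f g) t xs = (case xs of [] \<Rightarrow> None
     | n # ys \<Rightarrow> prim_iter (clocked f t ys) (\<lambda>m r. clocked g t (m # r # ys)) n)"
| "clocked (Mini f) t xs = (if \<exists>n\<le>t. is_mu (\<lambda>m. clocked f t (m # xs)) n
     then Some (LEAST n. is_mu (\<lambda>m. clocked f t (m # xs)) n) else None)"

lemma is_mu_unique: "is_mu h n \<Longrightarrow> is_mu h n' \<Longrightarrow> n = n'"
  unfolding is_mu_def by (metis linorder_neqE_nat option.inject nat.distinct(1))

lemma Least_is_mu: "is_mu h n \<Longrightarrow> (LEAST n. is_mu h n) = n"
  by (metis LeastI is_mu_unique)

lemma clocked_Mini_eq_Some:
  "clocked (Mini f) t xs = Some y \<longleftrightarrow> y \<le> t \<and> is_mu (\<lambda>m. clocked f t (m # xs)) y"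
  using Least_is_mu is_mu_unique by auto

lemma prim_iter_mono:
  assumes "prim_iter a h n = Some y" "\<And>v. a = Some v \<Longrightarrow> a' = Some v"
    "\<And>m r v. h m r = Some v \<Longrightarrow> h' m r = Some v"
  shows "prim_iter a' h' n = Some y"
  using assms(1)
proof (induction n arbitrary: y)
  case (Suc n)
  then show ?case using assms(3) by (cases "prim_iter a h n") auto
qed (use assms(2) in simp)

lemma clocked_mono: "clocked f t xs = Some y \<Longrightarrow> t \<le> t' \<Longrightarrow> clocked f t' xs = Some y"
proof (induction f arbitrary: xs y)
  case (Comp f gs)
  let ?rs = "map (\<lambda>g. clocked g t xs) gs"
  have defined: "None \<notin> set ?rs" using Comp.prems by (auto simp: Let_def split: if_splits)
  have same_args: "map (\<lambda>g. clocked g t' xs) gs = ?rs"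
  proof (rule map_cong[OF refl])
    fix g assume g: "g \<in> set gs"
    then obtain v where "clocked g t xs = Some v" using defined by (cases "clocked g t xs") force+
    then show "clocked g t' xs = clocked g t xs" using Comp.IH(2)[OF g] Comp.prems(2) by simp
  qed
  have "clocked f t (map the ?rs) = Some y" using Comp.prems defined by (simp add: Let_def)
  then have "clocked f t' (map the ?rs) = Some y" using Comp.IH(1) Comp.prems(2) by blast
  then show ?case using defined by (simp only: clocked.simps Let_def same_args if_False)
next
  case (Prim f g)
  then obtain n ys where "xs = n # ys" by (cases xs) auto
  with Prim show ?case
    by (auto intro!: prim_iter_mono[where a="clocked f t ys" and h="\<lambda>m r. clocked g t (m # r # ys)"])
next
  case (Mini f)
  then have "y \<le> t'" and "is_mu (\<lambda>m. clocked f t' (m # xs)) y"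
    unfolding clocked_Mini_eq_Some is_mu_def by (auto simp del: clocked.simps)
  then show ?case unfolding clocked_Mini_eq_Some by blast
qed simp_all

lemma prim_iter_sound:
  assumes "prim_iter (clocked f t ys) (\<lambda>m r. clocked g t (m # r # ys)) n = Some y"
    and "\<And>y. clocked f t ys = Some y \<Longrightarrow> rec_eval f ys y"
    and "\<And>zs y. clocked g t zs = Some y \<Longrightarrow> rec_eval g zs y"
  shows "rec_eval (Prim f g) (n # ys) y"
  using assms(1)
proof (induction n arbitrary: y)
  case 0 then show ?case using assms(2) by (auto intro: eval_Prim0)
next
  case (Suc n)
  then obtain r where "prim_iter (clocked f t ys) (\<lambda>m r. clocked g t (m # r # ys)) n = Some r"
    by (cases "prim_iter (clocked f t ys) (\<lambda>m r. clocked g t (m # r # ys)) n") auto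
  with Suc show ?case using assms(3) by (auto intro: eval_PrimS)
qed

lemma clocked_sound: "clocked f t xs = Some y \<Longrightarrow> rec_eval f xs y"
proof (induction f arbitrary: xs y)
  case Zero then show ?case by (auto intro: eval_Zero)
next
  case Succ then show ?case by (auto split: list.splits intro: eval_Succ)
next
  case (Proj i) then show ?case by (auto split: if_splits intro: eval_Proj)
next
  case (Comp f gs)
  let ?rs = "map (\<lambda>g. clocked g t xs) gs"
  have defined: "None \<notin> set ?rs" using Comp.prems by (auto simp: Let_def split: if_splits)
  have "list_all2 (\<lambda>g r. rec_eval g xs r) gs (map the ?rs)"
    unfolding list_all2_map2 list_all2_same
  proof
    fix g assume g: "g \<in> set gs"
    then obtain v where "clocked g t xs = Some v" using defined by (cases "clocked g t xs") force+
    then show "rec_eval g xs (the (clocked g t xs))" using Comp.IH(2)[OF g] by simp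
  qed
  moreover have "rec_eval f (map the ?rs) y" using Comp defined by (simp add: Let_def)
  ultimately show ?case by (rule eval_Comp)
next
  case (Prim f g)
  then obtain n ys where "xs = n # ys" by (cases xs) auto
  with Prim show ?case by (auto intro!: prim_iter_sound)
next
  case (Mini f)
  then have mu: "is_mu (\<lambda>m. clocked f t (m # xs)) y"
    unfolding clocked_Mini_eq_Some by blast
  from mu have "rec_eval f (y # xs) 0"
    unfolding is_mu_def using Mini.IH by blast
  moreover from mu have "\<forall>m<y. \<exists>v>0. rec_eval f (m # xs) v"
    unfolding is_mu_def using Mini.IH by (metis not_None_eq gr0I)
  ultimately show ?case by (rule eval_Mini)
qed

lemma clocked_complete: "rec_eval f xs y \<Longrightarrow> \<forall>\<^sub>F t in sequentially. clocked f t xs = Some y"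
proof (induction rule: rec_eval.induct)
  case (eval_Comp xs gs ys f y)
  have "\<forall>\<^sub>F t in sequentially. \<forall>i\<in>{..<length gs}. clocked (gs ! i) t xs = Some (ys ! i)"
    using eval_Comp.IH(1) by (intro eventually_ball_finite) (auto simp: list_all2_conv_all_nth)
  then have "\<forall>\<^sub>F t in sequentially. map (\<lambda>g. clocked g t xs) gs = map Some ys"
    by eventually_elim
       (use eval_Comp.IH(1) in \<open>auto simp: list_all2_conv_all_nth intro: nth_equalityI\<close>)
  with eval_Comp.IH(2) show ?case
    by (rule eventually_mono[OF eventually_conj]) (auto simp: Let_def comp_def)
next
  case (eval_PrimS f g n xs r y)
  from eval_PrimS.IH show ?case by eventually_elim simp
next
  case (eval_Mini f n xs)
  have "\<forall>\<^sub>F t in sequentially. \<forall>m\<in>{..<n}. clocked f t (m # xs) \<noteq> None \<and> clocked f t (m # xs) \<noteq> Some 0"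
  proof (intro eventually_ball_finite ballI)
    fix m assume "m \<in> {..<n}"
    then obtain v where "v > 0" "\<forall>\<^sub>F t in sequentially. clocked f t (m # xs) = Some v"
      using eval_Mini.IH(2) by auto
    then show "\<forall>\<^sub>F t in sequentially. clocked f t (m # xs) \<noteq> None \<and> clocked f t (m # xs) \<noteq> Some 0"
      by (auto elim!: eventually_mono)
  qed simp
  with eval_Mini.IH(1) eventually_ge_at_top[of n] show ?case
    by eventually_elim (auto simp del: clocked.simps simp: clocked_Mini_eq_Some is_mu_def)
qed auto

lemma rec_eval_iff_clocked: "rec_eval f xs y \<longleftrightarrow> (\<exists>t. clocked f t xs = Some y)"
  using clocked_sound clocked_complete[THEN eventually_happens'[OF sequentially_bot]] by blast


fun const_rf :: "nat \<Rightarrow> recf" where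
  "const_rf 0 = Zero"
| "const_rf (Suc k) = Comp Succ [const_rf k]"

lemma rec_eval_const_rf: "rec_eval (const_rf k) xs k"
  by (induction k) (auto intro!: eval_Zero eval_Comp eval_Succ)

lemma rec_eval_ProjI: "i < length xs \<Longrightarrow> xs ! i = v \<Longrightarrow> rec_eval (Proj i) xs v"
  using eval_Proj by blast

lemma rec_eval_Comp1: "rec_eval g xs a \<Longrightarrow> rec_eval f [a] y \<Longrightarrow> rec_eval (Comp f [g]) xs y"
  by (rule eval_Comp[where ys="[a]"]) auto

lemma rec_eval_Comp2:
  "rec_eval g1 xs a \<Longrightarrow> rec_eval g2 xs b \<Longrightarrow> rec_eval f [a, b] y \<Longrightarrow> rec_eval (Comp f [g1, g2]) xs y"
  by (rule eval_Comp[where ys="[a, b]"]) auto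

text \<open>The programs named \<open>_rf\<close> below act on the head of the argument list; the combinators
  named \<open>_of\<close> apply them to the values of other programs.\<close>

definition pred_rf :: recf where
  "pred_rf = Prim Zero (Proj 0)"

lemma rec_eval_pred_rf: "rec_eval pred_rf (x # xs) (x - 1)"
proof (induction x)
  case 0 then show ?case unfolding pred_rf_def by (auto intro: eval_Prim0 eval_Zero)
next
  case (Suc x) then show ?case unfolding pred_rf_def
    by (auto intro!: eval_PrimS[where r="x - 1"] rec_eval_ProjI)
qed

definition add_rf :: recf where
  "add_rf = Prim (Proj 0) (Comp Succ [Proj 1])"

lemma rec_eval_add_rf: "rec_eval add_rf (x # y # xs) (x + y)"
proof (induction x)
  case 0 then show ?case unfolding add_rf_def by (auto intro!: eval_Prim0 rec_eval_ProjI)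
next
  case (Suc x)
  have "rec_eval (Comp Succ [Proj 1]) (x # (x + y) # y # xs) (Suc (x + y))"
    by (rule rec_eval_Comp1) (auto intro: eval_Succ rec_eval_ProjI)
  with Suc show ?case unfolding add_rf_def by (auto intro: eval_PrimS)
qed

definition mult_rf :: recf where
  "mult_rf = Prim Zero (Comp add_rf [Proj 1, Proj 2])"

lemma rec_eval_mult_rf: "rec_eval mult_rf (x # y # xs) (x * y)"
proof (induction x)
  case 0 then show ?case unfolding mult_rf_def by (auto intro: eval_Prim0 eval_Zero)
next
  case (Suc x)
  have "rec_eval (Comp add_rf [Proj 1, Proj 2]) (x # (x * y) # y # xs) (x * y + y)"
    by (rule rec_eval_Comp2) (auto intro: rec_eval_add_rf rec_eval_ProjI)
  with Suc show ?case unfolding mult_rf_def by (auto intro: eval_PrimS simp: add.commute)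
qed

definition diff_rf :: recf where
  "diff_rf = Prim (Proj 0) (Comp pred_rf [Proj 1])"

lemma rec_eval_diff_rf: "rec_eval diff_rf (y # x # xs) (x - y)"
proof (induction y)
  case 0 then show ?case unfolding diff_rf_def by (auto intro!: eval_Prim0 rec_eval_ProjI)
next
  case (Suc y)
  have "rec_eval (Comp pred_rf [Proj 1]) (y # (x - y) # x # xs) (x - y - 1)"
    by (rule rec_eval_Comp1[OF _ rec_eval_pred_rf]) (rule rec_eval_ProjI; simp)
  with Suc show ?case unfolding diff_rf_def by (auto intro: eval_PrimS)
qed

definition sg_rf :: recf where
  "sg_rf = Prim Zero (const_rf 1)"

lemma rec_eval_sg_rf: "rec_eval sg_rf (x # xs) (if x = 0 then 0 else 1)"
proof (induction x)
  case 0 then show ?case unfolding sg_rf_def by (auto intro: eval_Prim0 eval_Zero)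
next
  case (Suc x) then show ?case unfolding sg_rf_def
    by (auto intro!: eval_PrimS[where r="if x = 0 then 0 else 1"] rec_eval_const_rf[of 1, simplified])
qed

definition nsg_rf :: recf where
  "nsg_rf = Prim (const_rf 1) Zero"

lemma rec_eval_nsg_rf: "rec_eval nsg_rf (x # xs) (if x = 0 then 1 else 0)"
proof (induction x)
  case 0 then show ?case
    unfolding nsg_rf_def by (auto intro: eval_Prim0 rec_eval_const_rf[of 1, simplified])
next
  case (Suc x) then show ?case unfolding nsg_rf_def
    by (auto intro!: eval_PrimS[where r="if x = 0 then 1 else 0"] eval_Zero)
qed

definition suc_of :: "recf \<Rightarrow> recf" where "suc_of g = Comp Succ [g]"
definition pred_of :: "recf \<Rightarrow> recf" where "pred_of g = Comp pred_rf [g]"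
definition sg_of :: "recf \<Rightarrow> recf" where "sg_of g = Comp sg_rf [g]"
definition nsg_of :: "recf \<Rightarrow> recf" where "nsg_of g = Comp nsg_rf [g]"
definition add_of :: "recf \<Rightarrow> recf \<Rightarrow> recf" where "add_of g h = Comp add_rf [g, h]"
definition mult_of :: "recf \<Rightarrow> recf \<Rightarrow> recf" where "mult_of g h = Comp mult_rf [g, h]"
definition diff_of :: "recf \<Rightarrow> recf \<Rightarrow> recf" where "diff_of g h = Comp diff_rf [h, g]"

lemma rec_eval_suc_of: "rec_eval g xs a \<Longrightarrow> rec_eval (suc_of g) xs (Suc a)"
  unfolding suc_of_def by (rule rec_eval_Comp1) (auto intro: eval_Succ)

lemma rec_eval_pred_of: "rec_eval g xs a \<Longrightarrow> rec_eval (pred_of g) xs (a - 1)"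
  unfolding pred_of_def by (rule rec_eval_Comp1[OF _ rec_eval_pred_rf])

lemma rec_eval_sg_of: "rec_eval g xs a \<Longrightarrow> rec_eval (sg_of g) xs (if a = 0 then 0 else 1)"
  unfolding sg_of_def by (rule rec_eval_Comp1[OF _ rec_eval_sg_rf])

lemma rec_eval_nsg_of: "rec_eval g xs a \<Longrightarrow> rec_eval (nsg_of g) xs (if a = 0 then 1 else 0)"
  unfolding nsg_of_def by (rule rec_eval_Comp1[OF _ rec_eval_nsg_rf])

lemma rec_eval_add_of: "rec_eval g xs a \<Longrightarrow> rec_eval h xs b \<Longrightarrow> rec_eval (add_of g h) xs (a + b)"
  unfolding add_of_def by (rule rec_eval_Comp2) (auto intro: rec_eval_add_rf)

lemma rec_eval_mult_of: "rec_eval g xs a \<Longrightarrow> rec_eval h xs b \<Longrightarrow> rec_eval (mult_of g h) xs (a * b)"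
  unfolding mult_of_def by (rule rec_eval_Comp2) (auto intro: rec_eval_mult_rf)

lemma rec_eval_diff_of: "rec_eval g xs a \<Longrightarrow> rec_eval h xs b \<Longrightarrow> rec_eval (diff_of g h) xs (a - b)"
  unfolding diff_of_def by (rule rec_eval_Comp2) (auto intro: rec_eval_diff_rf)

fun prod_list_of :: "recf list \<Rightarrow> recf" where
  "prod_list_of [] = const_rf 1"
| "prod_list_of (g # gs) = mult_of g (prod_list_of gs)"

lemma rec_eval_prod_list_of:
  "list_all2 (\<lambda>g v. rec_eval g xs v) gs vs \<Longrightarrow> rec_eval (prod_list_of gs) xs (prod_list vs)"
  by (induction rule: list_all2_induct) (auto intro: rec_eval_mult_of rec_eval_const_rf[of 1, simplified])

definition projs_from :: "nat \<Rightarrow> nat \<Rightarrow> recf list" where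
  "projs_from s k = map Proj [s..<s + k]"

lemma rec_eval_projs_from:
  assumes "length pre = s" "length xs = k"
  shows "list_all2 (\<lambda>g v. rec_eval g (pre @ xs) v) (projs_from s k) xs"
  using assms by (auto simp: projs_from_def list_all2_conv_all_nth nth_append intro!: rec_eval_ProjI)

definition skip_second :: "nat \<Rightarrow> recf \<Rightarrow> recf" where
  "skip_second k h = Comp h (Proj 0 # projs_from 2 k)"

lemma rec_eval_skip_second:
  "rec_eval h (j # xs) v \<Longrightarrow> length xs = k \<Longrightarrow> rec_eval (skip_second k h) (j # r # xs) v"
  unfolding skip_second_def
  using rec_eval_projs_from[of "[j, r]" 2 xs k]
  by (auto intro!: eval_Comp[where ys="j # xs"] rec_eval_ProjI)

definition sum_below :: "nat \<Rightarrow> recf \<Rightarrow> recf" where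
  "sum_below k h = Prim Zero (add_of (skip_second k h) (Proj 1))"

definition prod_below :: "nat \<Rightarrow> recf \<Rightarrow> recf" where
  "prod_below k h = Prim (const_rf 1) (mult_of (skip_second k h) (Proj 1))"

lemma rec_eval_sum_below:
  assumes "\<And>j. rec_eval h (j # xs) (H j)" "length xs = k"
  shows "rec_eval (sum_below k h) (n # xs) (\<Sum>j<n. H j)"
proof (induction n)
  case 0 then show ?case unfolding sum_below_def by (auto intro: eval_Prim0 eval_Zero)
next
  case (Suc n)
  have "rec_eval (add_of (skip_second k h) (Proj 1)) (n # (\<Sum>j<n. H j) # xs) (H n + (\<Sum>j<n. H j))"
    by (rule rec_eval_add_of) (auto intro: rec_eval_skip_second assms rec_eval_ProjI)
  with Suc show ?case unfolding sum_below_def by (auto intro: eval_PrimS simp: add.commute)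
qed

lemma rec_eval_prod_below:
  assumes "\<And>j. rec_eval h (j # xs) (H j)" "length xs = k"
  shows "rec_eval (prod_below k h) (n # xs) (\<Prod>j<n. H j)"
proof (induction n)
  case 0 then show ?case
    unfolding prod_below_def by (auto intro: eval_Prim0 rec_eval_const_rf[of 1, simplified])
next
  case (Suc n)
  have "rec_eval (mult_of (skip_second k h) (Proj 1)) (n # (\<Prod>j<n. H j) # xs) (H n * (\<Prod>j<n. H j))"
    by (rule rec_eval_mult_of) (auto intro: rec_eval_skip_second assms rec_eval_ProjI)
  with Suc show ?case unfolding prod_below_def by (auto intro: eval_PrimS simp: mult.commute)
qed


section \<open>Clocked evaluation is primitive recursive\<close>

definition enc :: "nat option \<Rightarrow> nat" where
  "enc x = (case x of None \<Rightarrow> 0 | Some y \<Rightarrow> Suc y)"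

lemma enc_simps [simp]: "enc None = 0" "enc (Some y) = Suc y"
  by (simp_all add: enc_def)

lemma enc_eq_0_iff: "enc x = 0 \<longleftrightarrow> x = None"
  by (cases x) auto

text \<open>\<open>clocked_rf f k\<close> is meant to map \<open>t # xs\<close>, for \<open>length xs = k\<close>, to \<open>enc (clocked f t xs)\<close>.
  The arity \<open>k\<close> is a compile-time parameter because it decides whether \<open>Succ\<close>, \<open>Proj i\<close> and
  \<open>Prim\<close> fail. A result \<open>0 = enc None\<close> is propagated by multiplying with its sign, and the
  \<open>\<mu>\<close>-search, bounded by the clock, becomes the sum in \<open>sum_first_mu\<close>.\<close>

fun clocked_rf :: "recf \<Rightarrow> nat \<Rightarrow> recf" where
  "clocked_rf Zero k = const_rf 1"
| "clocked_rf Succ k = (if k = 0 then Zero else suc_of (suc_of (Proj 1)))"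
| "clocked_rf (Proj i) k = (if i < k then suc_of (Proj (Suc i)) else Zero)"
| "clocked_rf (Comp f gs) k =
     mult_of (sg_of (prod_list_of (map (\<lambda>g. clocked_rf g k) gs)))
       (Comp (clocked_rf f (length gs)) (Proj 0 # map (\<lambda>g. pred_of (clocked_rf g k)) gs))"
| "clocked_rf (Prim f g) k = (case k of 0 \<Rightarrow> Zero | Suc k' \<Rightarrow>
     Comp (Prim (clocked_rf f k')
             (mult_of (sg_of (Proj 1))
               (Comp (clocked_rf g (Suc (Suc k'))) (Proj 2 # Proj 0 # pred_of (Proj 1) # projs_from 3 k'))))
       (Proj 1 # Proj 0 # projs_from 2 k'))"
| "clocked_rf (Mini f) k =
     (let e = Comp (clocked_rf f (Suc k)) (Proj 1 # Proj 0 # projs_from 2 k);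
          positive = sg_of (pred_of e);
          zero = mult_of (sg_of e) (nsg_of (pred_of e));
          summand = mult_of (suc_of (Proj 0)) (mult_of zero (prod_below (Suc k) positive))
      in Comp (sum_below (Suc k) summand) (suc_of (Proj 0) # Proj 0 # projs_from 1 k))"

lemma rec_eval_clocked_rf_Comp:
  assumes f: "\<And>ys. length ys = length gs \<Longrightarrow>
      rec_eval (clocked_rf f (length gs)) (t # ys) (enc (clocked f t ys))"
    and gs: "\<And>g. g \<in> set gs \<Longrightarrow> rec_eval (clocked_rf g k) (t # xs) (enc (clocked g t xs))"
  shows "rec_eval (clocked_rf (Comp f gs) k) (t # xs) (enc (clocked (Comp f gs) t xs))"
proof -
  let ?vs = "map (\<lambda>g. enc (clocked g t xs)) gs"
  let ?args = "map (\<lambda>g. enc (clocked g t xs) - 1) gs"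
  have "list_all2 (\<lambda>g v. rec_eval g (t # xs) v) (map (\<lambda>g. clocked_rf g k) gs) ?vs"
    by (simp add: list_all2_map1 list_all2_map2 list_all2_same gs)
  moreover have "list_all2 (\<lambda>g v. rec_eval g (t # xs) v)
      (Proj 0 # map (\<lambda>g. pred_of (clocked_rf g k)) gs) (t # ?args)"
    using gs[THEN rec_eval_pred_of]
    by (simp add: list_all2_map1 list_all2_map2 list_all2_same rec_eval_ProjI)
  then have "rec_eval (Comp (clocked_rf f (length gs)) (Proj 0 # map (\<lambda>g. pred_of (clocked_rf g k)) gs))
      (t # xs) (enc (clocked f t ?args))"
    by (rule eval_Comp) (rule f, simp)
  ultimately have result: "rec_eval (clocked_rf (Comp f gs) k) (t # xs)
     ((if prod_list ?vs = 0 then 0 else 1) * enc (clocked f t ?args))"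
    unfolding clocked_rf.simps by (intro rec_eval_mult_of rec_eval_sg_of rec_eval_prod_list_of)
  show ?thesis
  proof (cases "None \<in> set (map (\<lambda>g. clocked g t xs) gs)")
    case True
    then have "prod_list ?vs = 0" by (force simp: prod_list_zero_iff)
    with result True show ?thesis by (simp add: Let_def)
  next
    case False
    then have "prod_list ?vs \<noteq> 0" by (auto simp: prod_list_zero_iff enc_eq_0_iff) (metis image_eqI)
    moreover have "?args = map the (map (\<lambda>g. clocked g t xs) gs)"
      using False by (auto simp: enc_def split: option.splits) (metis image_eqI)
    then have "clocked (Comp f gs) t xs = clocked f t ?args"
      by (simp only: clocked.simps Let_def if_not_P[OF False])
    ultimately show ?thesis using result by simp
  qed
qed

lemma rec_eval_clocked_rf_Prim:
  assumes f: "rec_eval (clocked_rf f k) (t # ys) (enc (clocked f t ys))"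
    and g: "\<And>zs. length zs = Suc (Suc k) \<Longrightarrow>
      rec_eval (clocked_rf g (Suc (Suc k))) (t # zs) (enc (clocked g t zs))"
    and len: "length ys = k"
  shows "rec_eval (clocked_rf (Prim f g) (Suc k)) (t # n # ys) (enc (clocked (Prim f g) t (n # ys)))"
proof -
  define step where "step = mult_of (sg_of (Proj 1))
    (Comp (clocked_rf g (Suc (Suc k))) (Proj 2 # Proj 0 # pred_of (Proj 1) # projs_from 3 k))"
  let ?iter = "prim_iter (clocked f t ys) (\<lambda>m r. clocked g t (m # r # ys))"
  have "rec_eval (Prim (clocked_rf f k) step) (n # t # ys) (enc (?iter n))"
  proof (induction n)
    case 0 then show ?case using f by (auto intro: eval_Prim0)
  next
    case (Suc n)
    let ?r = "enc (?iter n)"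
    have "list_all2 (\<lambda>h v. rec_eval h (n # ?r # t # ys) v)
        (Proj 2 # Proj 0 # pred_of (Proj 1) # projs_from 3 k) (t # n # (?r - 1) # ys)"
      using rec_eval_projs_from[of "[n, ?r, t]" 3 ys k] len
      by (auto intro!: rec_eval_ProjI rec_eval_pred_of[where a="?r", simplified])
    then have "rec_eval (Comp (clocked_rf g (Suc (Suc k))) (Proj 2 # Proj 0 # pred_of (Proj 1) # projs_from 3 k))
        (n # ?r # t # ys) (enc (clocked g t (n # (?r - 1) # ys)))"
      by (rule eval_Comp) (rule g, use len in simp)
    then have "rec_eval step (n # ?r # t # ys) ((if ?r = 0 then 0 else 1) * enc (clocked g t (n # (?r - 1) # ys)))"
      unfolding step_def by (intro rec_eval_mult_of rec_eval_sg_of rec_eval_ProjI) auto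
    moreover have "(if ?r = 0 then 0 else 1) * enc (clocked g t (n # (?r - 1) # ys)) = enc (?iter (Suc n))"
      by (cases "?iter n") auto
    ultimately show ?case using eval_PrimS[OF Suc] by simp
  qed
  moreover have "list_all2 (\<lambda>h v. rec_eval h (t # n # ys) v) (Proj 1 # Proj 0 # projs_from 2 k) (n # t # ys)"
    using rec_eval_projs_from[of "[t, n]" 2 ys k] len by (auto intro!: rec_eval_ProjI)
  ultimately show ?thesis unfolding step_def by (auto intro: eval_Comp)
qed

lemma sum_first_mu:
  fixes h :: "nat \<Rightarrow> nat option"
  shows "(\<Sum>j<Suc t. Suc j * ((if h j = Some 0 then 1 else 0)
           * (\<Prod>m<j. if h m \<noteq> None \<and> h m \<noteq> Some 0 then 1 else 0)))
        = enc (if \<exists>n\<le>t. is_mu h n then Some (LEAST n. is_mu h n) else None)"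
proof -
  have summand: "Suc j * ((if h j = Some 0 then 1 else 0)
           * (\<Prod>m<j. if h m \<noteq> None \<and> h m \<noteq> Some 0 then 1 else 0)) = (if is_mu h j then Suc j else 0)" for j
    by (induction j) (auto simp: is_mu_def less_Suc_eq)
  show ?thesis
  proof (cases "\<exists>n\<le>t. is_mu h n")
    case True
    then obtain n where n: "n \<le> t" "is_mu h n" by blast
    then have "(\<Sum>j<Suc t. if is_mu h j then Suc j else 0) = (\<Sum>j<Suc t. if j = n then Suc n else 0)"
      by (intro sum.cong) (auto dest: is_mu_unique)
    also have "\<dots> = Suc n" using n(1) by (simp add: sum.delta)
    finally show ?thesis unfolding summand using True Least_is_mu[OF n(2)] by simp
  next
    case False
    then show ?thesis unfolding summand by (auto intro!: sum.neutral)
  qed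
qed

lemma sg_pred_enc: "(if enc x - 1 = 0 then 0 else 1) = (if x \<noteq> None \<and> x \<noteq> Some 0 then 1 else (0::nat))"
  by (cases x) auto

lemma sg_nsg_pred_enc:
  "(if enc x = 0 then 0 else 1) * (if enc x - 1 = 0 then 1 else 0) = (if x = Some 0 then 1 else (0::nat))"
  by (cases x) auto

lemma rec_eval_clocked_rf_Mini:
  assumes f: "\<And>zs. length zs = Suc k \<Longrightarrow> rec_eval (clocked_rf f (Suc k)) (t # zs) (enc (clocked f t zs))"
    and len: "length xs = k"
  shows "rec_eval (clocked_rf (Mini f) k) (t # xs) (enc (clocked (Mini f) t xs))"
proof -
  let ?h = "\<lambda>j. clocked f t (j # xs)"
  define e where "e = Comp (clocked_rf f (Suc k)) (Proj 1 # Proj 0 # projs_from 2 k)"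
  define positive where "positive = sg_of (pred_of e)"
  define zero where "zero = mult_of (sg_of e) (nsg_of (pred_of e))"
  define summand where "summand = mult_of (suc_of (Proj 0)) (mult_of zero (prod_below (Suc k) positive))"
  have e: "rec_eval e (j # t # xs) (enc (?h j))" for j
  proof -
    have "list_all2 (\<lambda>g v. rec_eval g (j # t # xs) v) (Proj 1 # Proj 0 # projs_from 2 k) (t # j # xs)"
      using rec_eval_projs_from[of "[j, t]" 2 xs k] len by (auto intro!: rec_eval_ProjI)
    then show ?thesis unfolding e_def by (rule eval_Comp) (rule f, use len in simp)
  qed
  have positive: "rec_eval positive (j # t # xs) (if ?h j \<noteq> None \<and> ?h j \<noteq> Some 0 then 1 else 0)" for j
    using rec_eval_sg_of[OF rec_eval_pred_of[OF e]] unfolding positive_def sg_pred_enc .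
  have zero: "rec_eval zero (j # t # xs) (if ?h j = Some 0 then 1 else 0)" for j
    using rec_eval_mult_of[OF rec_eval_sg_of[OF e] rec_eval_nsg_of[OF rec_eval_pred_of[OF e]]]
    unfolding zero_def sg_nsg_pred_enc .
  have "rec_eval summand (j # t # xs) (Suc j * ((if ?h j = Some 0 then 1 else 0)
      * (\<Prod>m<j. if ?h m \<noteq> None \<and> ?h m \<noteq> Some 0 then 1 else 0)))" for j
    unfolding summand_def using len
    by (intro rec_eval_mult_of rec_eval_suc_of zero rec_eval_prod_below[OF positive]) (auto intro: rec_eval_ProjI)
  then have "rec_eval (sum_below (Suc k) summand) (Suc t # t # xs) (enc (clocked (Mini f) t xs))"
    unfolding clocked.simps sum_first_mu[symmetric] by (rule rec_eval_sum_below) (use len in simp)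
  moreover have "list_all2 (\<lambda>g v. rec_eval g (t # xs) v) (suc_of (Proj 0) # Proj 0 # projs_from 1 k)
      (Suc t # t # xs)"
    using rec_eval_projs_from[of "[t]" 1 xs k] len by (auto intro!: rec_eval_ProjI rec_eval_suc_of)
  ultimately show ?thesis
    unfolding clocked_rf.simps Let_def e_def[symmetric] positive_def[symmetric] zero_def[symmetric]
      summand_def[symmetric]
    by (intro eval_Comp)
qed

lemma rec_eval_clocked_rf: "length xs = k \<Longrightarrow> rec_eval (clocked_rf f k) (t # xs) (enc (clocked f t xs))"
proof (induction f arbitrary: k xs)
  case (Comp f gs)
  show ?case
  proof (rule rec_eval_clocked_rf_Comp)
    show "rec_eval (clocked_rf f (length gs)) (t # ys) (enc (clocked f t ys))"
      if "length ys = length gs" for ys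
      using Comp.IH(1)[OF that] .
  qed (use Comp in blast)
next
  case (Prim f g)
  show ?case
  proof (cases xs)
    case Nil
    with Prim.prems show ?thesis by (auto intro: eval_Zero)
  next
    case (Cons n ys)
    with Prim.prems obtain k' where k: "k = Suc k'" and len: "length ys = k'" by auto
    show ?thesis unfolding Cons k by (rule rec_eval_clocked_rf_Prim) (auto intro: Prim.IH len)
  qed
next
  case (Mini f)
  then show ?case by (intro rec_eval_clocked_rf_Mini) (auto intro: Mini.IH)
next
  case Zero then show ?case using rec_eval_const_rf[of 1] by simp
next
  case Succ then show ?case by (cases xs) (auto intro!: eval_Zero rec_eval_suc_of rec_eval_ProjI)
next
  case (Proj i) then show ?case by (auto intro!: eval_Zero rec_eval_suc_of rec_eval_ProjI)
qed


section \<open>Computable subsets of c.e. sets\<close>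

definition enumerated :: "recf \<Rightarrow> nat \<Rightarrow> nat set" where
  "enumerated f t = {i. clocked f t [i] \<noteq> None}"

lemma mono_enumerated: "mono (enumerated f)"
  unfolding enumerated_def by (intro monoI) (auto dest: clocked_mono)

lemma enumerated_subset: "enumerated f t \<subseteq> {n. \<exists>y. rec_eval f [n] y}"
  unfolding enumerated_def using rec_eval_iff_clocked by fastforce

lemma finite_subset_enumerated:
  assumes "finite F" and "F \<subseteq> {n. \<exists>y. rec_eval f [n] y}"
  shows "\<exists>t. F \<subseteq> enumerated f t"
proof -
  have "\<forall>\<^sub>F t in sequentially. \<forall>i\<in>F. clocked f t [i] \<noteq> None"
  proof (intro eventually_ball_finite ballI)
    fix i assume "i \<in> F"
    with assms(2) obtain y where "rec_eval f [i] y" by blast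
    then show "\<forall>\<^sub>F t in sequentially. clocked f t [i] \<noteq> None"
      by (rule clocked_complete[THEN eventually_mono]) simp
  qed (rule assms(1))
  then show ?thesis
    using eventually_happens'[OF sequentially_bot] unfolding enumerated_def by blast
qed

definition halts_rf :: "recf \<Rightarrow> recf" where
  "halts_rf f = sg_of (clocked_rf f 1)"

lemma rec_eval_halts_rf: "rec_eval (halts_rf f) [t, n] (if n \<in> enumerated f t then 1 else 0)"
proof -
  have "(if enc (clocked f t [n]) = 0 then 0 else 1) = (if n \<in> enumerated f t then 1 else (0::nat))"
    by (simp add: enumerated_def enc_eq_0_iff)
  with rec_eval_sg_of[OF rec_eval_clocked_rf[of "[n]" 1 f t]] show ?thesis
    unfolding halts_rf_def by simp
qed

lemma computable_set_enumerated_within: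
  assumes "\<And>n. rec_eval g [n] (T n)"
  shows "computable_set {n. n \<in> enumerated f (T n)}"
  unfolding computable_set_def mem_Collect_eq
proof (intro exI allI)
  show "rec_eval (Comp (halts_rf f) [g, Proj 0]) [n] (if n \<in> enumerated f (T n) then 1 else 0)" for n
    by (rule rec_eval_Comp2[OF assms rec_eval_ProjI rec_eval_halts_rf]) simp_all
qed

lemma rec_eval_Mini_Least:
  assumes "\<And>t. rec_eval g (t # xs) (if P t then 0 else 1)" and "\<exists>t. P t"
  shows "rec_eval (Mini g) xs (LEAST t. P t)"
proof (rule eval_Mini)
  show "rec_eval g ((LEAST t. P t) # xs) 0"
    using assms(1)[of "LEAST t. P t"] LeastI_ex[OF assms(2)] by simp
  show "\<forall>m<(LEAST t. P t). \<exists>v>0. rec_eval g (m # xs) v"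
  proof (intro allI impI)
    fix m assume "m < (LEAST t. P t)"
    then have "\<not> P m" by (rule not_less_Least)
    with assms(1)[of m] show "\<exists>v>0. rec_eval g (m # xs) v" by auto
  qed
qed

definition count_rf :: "recf \<Rightarrow> recf" where
  "count_rf f = Comp (sum_below 1 (Comp (halts_rf f) [Proj 1, Proj 0])) [Proj 1, Proj 0]"

lemma rec_eval_count_rf: "rec_eval (count_rf f) [t, m] (card (enumerated f t \<inter> {0..<m}))"
proof -
  have "rec_eval (Comp (halts_rf f) [Proj 1, Proj 0]) [i, t] (if i \<in> enumerated f t then 1 else 0)" for i
    by (rule rec_eval_Comp2[OF _ _ rec_eval_halts_rf]) (auto intro: rec_eval_ProjI)
  then have "rec_eval (sum_below 1 (Comp (halts_rf f) [Proj 1, Proj 0])) [m, t]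
      (\<Sum>i<m. if i \<in> enumerated f t then 1 else 0)"
    by (rule rec_eval_sum_below) simp
  moreover have "(\<Sum>i<m. if i \<in> enumerated f t then 1 else 0) = card (enumerated f t \<inter> {0..<m})"
  proof -
    have "(\<Sum>i<m. if i \<in> enumerated f t then 1 else 0) = card {i\<in>{..<m}. i \<in> enumerated f t}"
      by (simp add: sum.inter_filter[symmetric])
    also have "\<dots> = card (enumerated f t \<inter> {0..<m})"
      by (rule arg_cong[where f = card]) auto
    finally show ?thesis .
  qed
  ultimately show ?thesis
    unfolding count_rf_def by (intro rec_eval_Comp2) (auto intro: rec_eval_ProjI)
qed

definition stage_test_rf :: "recf \<Rightarrow> nat \<Rightarrow> nat \<Rightarrow> nat \<Rightarrow> recf" where
  "stage_test_rf f N a b = mult_of (nsg_of (diff_of (const_rf N) (Proj 1)))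
     (sg_of (diff_of (mult_of (const_rf a) (Proj 1)) (mult_of (const_rf b) (count_rf f))))"

lemma rec_eval_stage_test_rf:
  "rec_eval (stage_test_rf f N a b) [t, m]
     (if m < N \<or> a * m \<le> b * card (enumerated f t \<inter> {0..<m}) then 0 else 1)"
proof -
  let ?c = "card (enumerated f t \<inter> {0..<m})"
  have "rec_eval (stage_test_rf f N a b) [t, m]
      ((if N - m = 0 then 1 else 0) * (if a * m - b * ?c = 0 then 0 else 1))"
    unfolding stage_test_rf_def
    by (intro rec_eval_mult_of rec_eval_nsg_of rec_eval_sg_of rec_eval_diff_of rec_eval_const_rf
        rec_eval_count_rf rec_eval_ProjI) auto
  then show ?thesis by (auto simp: not_less)
qed

lemma rec_eval_sum_upto_mult:
  assumes "\<And>m. rec_eval s [m] (S m)"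
  shows "rec_eval (Comp (sum_below 0 s) [suc_of (mult_of (const_rf K) (Proj 0))]) [n] (\<Sum>m<Suc (K * n). S m)"
proof (rule rec_eval_Comp1)
  show "rec_eval (suc_of (mult_of (const_rf K) (Proj 0))) [n] (Suc (K * n))"
    by (intro rec_eval_suc_of rec_eval_mult_of rec_eval_const_rf rec_eval_ProjI) simp_all
  show "rec_eval (sum_below 0 s) [Suc (K * n)] (\<Sum>m<Suc (K * n). S m)"
    by (rule rec_eval_sum_below[OF assms]) simp
qed

lemma card_le_card_delayed:
  fixes E :: "nat \<Rightarrow> nat set"
  assumes mono: "mono E" and "K > 0" and delay: "\<And>i. m < Suc (K * i) \<Longrightarrow> s \<le> T i"
  shows "card (E s \<inter> {0..<m}) \<le> card ({i. i \<in> E (T i)} \<inter> {0..<m}) + (m div K + 1)"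
proof -
  have "E s \<inter> {0..<m} \<subseteq> ({i. i \<in> E (T i)} \<inter> {0..<m}) \<union> {..m div K}"
  proof
    fix i assume i: "i \<in> E s \<inter> {0..<m}"
    show "i \<in> ({i. i \<in> E (T i)} \<inter> {0..<m}) \<union> {..m div K}"
    proof (cases "i \<le> m div K")
      case False
      with \<open>K > 0\<close> have "m < Suc (K * i)"
        by (simp add: not_le less_eq_div_iff_mult_less_eq mult.commute)
      then have "E s \<subseteq> E (T i)" using delay mono by (simp add: monoD)
      with i show ?thesis by auto
    qed simp
  qed
  then have "card (E s \<inter> {0..<m}) \<le> card (({i. i \<in> E (T i)} \<inter> {0..<m}) \<union> {..m div K})"
    by (rule card_mono[rotated]) simp
  also have "\<dots> \<le> card ({i. i \<in> E (T i)} \<inter> {0..<m}) + card {..m div K}"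
    by (rule card_Un_le)
  finally show ?thesis by simp
qed

definition stage :: "recf \<Rightarrow> nat \<Rightarrow> nat \<Rightarrow> nat \<Rightarrow> nat \<Rightarrow> nat" where
  "stage f N a b m = (LEAST t. m < N \<or> a * m \<le> b * card (enumerated f t \<inter> {0..<m}))"

lemma rec_eval_stage:
  assumes "\<exists>t. m < N \<or> a * m \<le> b * card (enumerated f t \<inter> {0..<m})"
  shows "rec_eval (Mini (stage_test_rf f N a b)) [m] (stage f N a b m)"
  unfolding stage_def using rec_eval_stage_test_rf assms by (rule rec_eval_Mini_Least)

lemma ce_set_computable_subset:
  assumes "ce_set A" and "K > 0" and dense: "\<And>m. N \<le> m \<Longrightarrow> a * m \<le> b * card (A \<inter> {0..<m})"
  shows "\<exists>B\<subseteq>A. computable_set B \<and> (\<forall>m\<ge>N. a * m \<le> b * (card (B \<inter> {0..<m}) + (m div K + 1)))"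
proof -
  obtain f where A: "A = {n. \<exists>y. rec_eval f [n] y}"
    using assms(1) unfolding ce_set_def by blast
  have reached: "\<exists>t. m < N \<or> a * m \<le> b * card (enumerated f t \<inter> {0..<m})" for m
  proof (cases "m < N")
    case False
    obtain t where "A \<inter> {0..<m} \<subseteq> enumerated f t"
      using finite_subset_enumerated[of "A \<inter> {0..<m}"] A by auto
    with enumerated_subset[of f t] A have "enumerated f t \<inter> {0..<m} = A \<inter> {0..<m}" by blast
    with False dense have "a * m \<le> b * card (enumerated f t \<inter> {0..<m})" by simp
    then show ?thesis by blast
  qed blast
  define T where "T n = (\<Sum>m<Suc (K * n). stage f N a b m)" for n
  define B where "B = {n. n \<in> enumerated f (T n)}"
  have "B \<subseteq> A" unfolding B_def A using enumerated_subset by blast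
  moreover have "computable_set B"
    unfolding B_def T_def
    by (rule computable_set_enumerated_within, rule rec_eval_sum_upto_mult, rule rec_eval_stage, rule reached)
  moreover have "a * m \<le> b * (card (B \<inter> {0..<m}) + (m div K + 1))" if "N \<le> m" for m
  proof -
    have "a * m \<le> b * card (enumerated f (stage f N a b m) \<inter> {0..<m})"
      using LeastI_ex[OF reached[of m]] that unfolding stage_def by simp
    moreover have "\<And>n. m < Suc (K * n) \<Longrightarrow> stage f N a b m \<le> T n"
      unfolding T_def by (rule member_le_sum) auto
    with mono_enumerated \<open>K > 0\<close>
    have "card (enumerated f (stage f N a b m) \<inter> {0..<m}) \<le> card (B \<inter> {0..<m}) + (m div K + 1)"
      unfolding B_def by (rule card_le_card_delayed)
    ultimately show ?thesis by (meson le_trans mult_le_mono2)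
  qed
  ultimately show ?thesis by blast
qed


section \<open>Lower density\<close>

lemma rho_le_1: "rho n S \<le> 1"
proof -
  have "card (S \<inter> {0..<n}) \<le> n"
    using card_mono[of "{0..<n}" "S \<inter> {0..<n}"] by auto
  then show ?thesis unfolding rho_def by (cases n) auto
qed

lemma lower_density_le_1: "lower_density S \<le> 1"
  unfolding lower_density_def by (rule Liminf_le) (simp_all add: rho_le_1)

lemma lower_density_ge:
  assumes "\<And>m. N \<le> m \<Longrightarrow> c * real m \<le> real (card (S \<inter> {0..<m})) + C"
  shows "ereal c \<le> lower_density S"
proof -
  have "(\<lambda>n. c - C / real (Suc n)) \<longlonglongrightarrow> c - 0"
    by (rule tendsto_diff[OF tendsto_const LIMSEQ_Suc[OF lim_const_over_n]])
  then have "((\<lambda>n. ereal (c - C / real (Suc n))) \<longlongrightarrow> ereal c) sequentially"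
    by (intro tendsto_ereal) simp
  then have "ereal c = liminf (\<lambda>n. ereal (c - C / real (Suc n)))"
    by (rule lim_imp_Liminf[OF trivial_limit_sequentially, symmetric])
  also have "\<dots> \<le> lower_density S"
    unfolding lower_density_def
  proof (rule Liminf_mono, unfold eventually_sequentially, intro exI allI impI)
    fix n assume "N \<le> n"
    then have "c * real (Suc n) \<le> real (card (S \<inter> {0..<Suc n})) + C" by (intro assms) simp
    then have "(c * real (Suc n) - C) / real (Suc n) \<le> real (card (S \<inter> {0..<Suc n})) / real (Suc n)"
      by (intro divide_right_mono) auto
    then show "ereal (c - C / real (Suc n)) \<le> ereal (rho (Suc n) S)"
      unfolding rho_def by (simp add: diff_divide_distrib)
  qed
  finally show ?thesis .
qed

lemma lower_density_nonneg: "0 \<le> lower_density S"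
  unfolding lower_density_def by (rule Liminf_bounded) (simp add: rho_def)

lemma card_gt_of_less_lower_density:
  assumes "ereal r < lower_density S"
  obtains N where "\<And>m. N \<le> m \<Longrightarrow> r * real m < real (card (S \<inter> {0..<m}))"
proof -
  have "\<forall>\<^sub>F n in sequentially. ereal r < ereal (rho (Suc n) S)"
    using assms unfolding lower_density_def by (rule less_LiminfD)
  then obtain N where N: "\<And>n. N \<le> n \<Longrightarrow> r < rho (Suc n) S"
    unfolding eventually_sequentially by auto
  have "r * real m < real (card (S \<inter> {0..<m}))" if "Suc N \<le> m" for m
  proof -
    from that obtain n where "m = Suc n" "N \<le> n" by (cases m) auto
    with N show ?thesis unfolding rho_def by (simp add: field_simps)
  qed
  then show thesis by (rule that)
qed

lemma lower_density_rational_approx: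
  assumes "\<delta> > 0"
  obtains a b N :: nat where "b > 0" and "lower_density S < ereal (real a / real b + \<delta>)"
    and "\<And>m. N \<le> m \<Longrightarrow> a * m \<le> b * card (S \<inter> {0..<m})"
proof -
  obtain d where d: "lower_density S = ereal d" "0 \<le> d"
    using lower_density_nonneg[of S] lower_density_le_1[of S] by (cases "lower_density S") auto
  show thesis
  proof (cases "d < \<delta>")
    case True
    with d show thesis by (intro that[where a = 0 and b = 1 and N = 0]) auto
  next
    case False
    obtain r where r: "r \<in> \<rat>" "d - \<delta> < r" "r < d"
      using Rats_dense_in_real[of "d - \<delta>" d] assms by auto
    with False have "r > 0" by linarith
    obtain a b :: nat where "b \<noteq> 0" and r_eq: "r = real a / real b"
      using Rats_abs_nat_div_natE[OF r(1)] \<open>r > 0\<close> by (metis abs_of_pos)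
    obtain N where N: "\<And>m. N \<le> m \<Longrightarrow> r * real m < real (card (S \<inter> {0..<m}))"
      using card_gt_of_less_lower_density[of r S] d r by auto
    have "a * m \<le> b * card (S \<inter> {0..<m})" if "N \<le> m" for m
    proof -
      from N[OF that] \<open>b \<noteq> 0\<close> have "real (a * m) < real (b * card (S \<inter> {0..<m}))"
        unfolding r_eq by (simp add: field_simps)
      then show ?thesis by linarith
    qed
    moreover have "lower_density S < ereal (real a / real b + \<delta>)"
      using d r r_eq by simp
    ultimately show thesis using \<open>b \<noteq> 0\<close> by (intro that) auto
  qed
qed

lemma density_bound_of_nat_bound:
  fixes a b c m K :: nat
  assumes "a * m \<le> b * (c + (m div K + 1))" and "b > 0"
  shows "(real a / real b - 1 / real K) * real m \<le> real c + 1"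
proof -
  have "real a * real m \<le> real b * (real c + real (m div K) + 1)"
    using assms(1) by (metis of_nat_le_iff of_nat_mult of_nat_add of_nat_1 add.assoc)
  also have "\<dots> \<le> real b * (real c + real m / real K + 1)"
    by (intro mult_left_mono add_mono order_refl of_nat_div_le_of_nat) simp
  finally have "real a / real b * real m \<le> real c + real m / real K + 1"
    using assms(2) by (simp add: field_simps)
  then show ?thesis by (simp add: left_diff_distrib)
qed

theorem mainTheorem7:
  fixes A :: "nat set" and \<epsilon> :: real
  assumes "ce_set A" and "\<epsilon> > 0"
  shows "\<exists>B. B \<subseteq> A \<and> computable_set B \<and> lower_density B > lower_density A - ereal \<epsilon>"
proof -
  have "\<epsilon> / 2 > 0" using assms(2) by simp
  then obtain a b N where "b > 0" and approx: "lower_density A < ereal (real a / real b + \<epsilon> / 2)"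
    and dense: "\<And>m. N \<le> m \<Longrightarrow> a * m \<le> b * card (A \<inter> {0..<m})"
    by (rule lower_density_rational_approx[of _ A]) blast
  obtain K :: nat where "K > 0" and K: "1 / real K < \<epsilon> / 2"
    using ex_inverse_of_nat_less[OF \<open>\<epsilon> / 2 > 0\<close>] by (auto simp: inverse_eq_divide)
  obtain B where "B \<subseteq> A" "computable_set B"
    and bound: "\<And>m. N \<le> m \<Longrightarrow> a * m \<le> b * (card (B \<inter> {0..<m}) + (m div K + 1))"
    using ce_set_computable_subset[OF assms(1) \<open>K > 0\<close> dense] by blast
  have "ereal (real a / real b - 1 / real K) \<le> lower_density B"
    using density_bound_of_nat_bound[OF bound \<open>b > 0\<close>] by (rule lower_density_ge)
  moreover have "lower_density A - ereal \<epsilon> < ereal (real a / real b - 1 / real K)"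
    using approx K by (cases "lower_density A") auto
  ultimately show ?thesis using \<open>B \<subseteq> A\<close> \<open>computable_set B\<close> by (intro exI[of _ B]) auto
qed

end
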